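(* Let $r\ge1$ and $N\ge r$ be integers, let $a_{-r},\dots,a_0$ be coefficients with $a_{-r}\neq0$ and $|a_0|<1$, and let $B\in\mathcal M_{r,N}(\mathbb C)$ be a constant matrix whose left $r\times r$ block $B[1:r,1:r]$ is invertible. For every $z\in\overline{\mathcal U}$ there exists a unique matrix $C(z)\in\mathcal M_r(\mathbb C)$ such that \[ B\,\pi(U)=\big(0_{r\times(N-r)}\ \big|\ C(z)\big)\,\pi(U)\quad\text{for all }U\in\mathcal E^s(z). \] Moreover the entries of $C(z)$ are polynomial functions of $z$, and $\det C(z)$ is a polynomial in $z$ of degree exactly $N-r$.
   Context: $\overline{\mathcal U}=\{z\in\mathbb C:|z|\ge1\}$. For $z\in\overline{\mathcal U}$, $\mathcal E^s(z)$ denotes the (r-dimensional) space of complex sequences $U=(U_j)_{j\ge -r}$ satisfying $zU_j=\sum_{k=-r}^{0}a_kU_{j+k}$ for all $j\ge 0$. The map $\pi$ sends such a sequence to its first $N$ components, $\pi(U)=(U_{-r},U_{-r+1},\dots,U_{-r+N-1})^T\in\mathbb C^N$. $0_{r\times(N-r)}$ is the zero matrix, so $(0\,|\,C(z))\in\mathcal M_{r,N}(\mathbb C)$. *)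

theory Defs
  imports "Jordan_Normal_Form.Determinant" "HOL-Computational_Algebra.Polynomial"
begin

text \<open>Stable space E^s(z): complex sequences U indexed by integers j >= -r
  (entries below -r are fixed to 0, i.e. not part of the sequence) satisfying
  z U_j = sum_{k=-r}^{0} a_k U_{j+k} for all j >= 0.\<close>
definition Es :: "nat \<Rightarrow> (int \<Rightarrow> complex) \<Rightarrow> complex \<Rightarrow> (int \<Rightarrow> complex) set" where
  "Es r a z = {U. (\<forall>j. j < - int r \<longrightarrow> U j = 0) \<and>
      (\<forall>j\<ge>0. z * U j = (\<Sum>k\<in>{- int r..0}. a k * U (j + k)))}"

definition piN :: "nat \<Rightarrow> nat \<Rightarrow> (int \<Rightarrow> complex) \<Rightarrow> complex vec" where
  "piN r N U = vec N (\<lambda>i. U (int i - int r))"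

definition zero_pad :: "nat \<Rightarrow> nat \<Rightarrow> complex mat \<Rightarrow> complex mat" where
  "zero_pad r N C = mat r N (\<lambda>(i, j). if j < N - r then 0 else C $$ (i, j - (N - r)))"

definition left_block :: "nat \<Rightarrow> complex mat \<Rightarrow> complex mat" where
  "left_block r B = mat r r (\<lambda>(i, j). B $$ (i, j))"

end

theory Submission
  imports Defs
begin

text \<open>
  Read backwards from the end of the window, the recurrence defining E^s(z) can be solved for
  U(j - r) because a(-r) is nonzero. Hence every entry of pi(U) is a fixed polynomial
  combination of the last r entries y of the window, pi(U) = F(z) y, and C(z) = B F(z) works.
  Conversely, since |z| >= 1 > |a(0)|, the recurrence can also be solved forwards, so every y
  is the tail of some U in E^s(z); this gives uniqueness.

  For the degree, give z the weight r. Going back r steps multiplies by (z - a(0)) / a(-r),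
  so entry (i, p) of F has weighted degree at most N - r + p - i, and its coefficient of
  exactly that weight is a power of 1 / a(-r) if r divides N - r + p - i and 0 otherwise.
  After multiplying B by the inverse of its left block, row t of C is row t of F plus a
  combination of rows i >= r of F, which have strictly smaller weight. Expanding the
  determinant, det C has weighted degree at most the sum of N - r + p over the columns minus
  the sum of t over the rows, which is r (N - r); its coefficient of z^(N - r) is the
  determinant of a matrix with exactly one nonzero entry in each row and column.
\<close>

section \<open>Weighted degrees of polynomials\<close>

definition weighted_degree_le :: "nat \<Rightarrow> int \<Rightarrow> 'a::zero poly \<Rightarrow> bool" where
  "weighted_degree_le d e p \<longleftrightarrow> (\<forall>k. e < int k * int d \<longrightarrow> coeff p k = 0)"

definition weighted_coeff :: "nat \<Rightarrow> int \<Rightarrow> 'a::zero poly \<Rightarrow> 'a" where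
  "weighted_coeff d e p = (if 0 \<le> e \<and> int d dvd e then coeff p (nat (e div int d)) else 0)"

lemma weighted_coeff_eq_coeff: "d > 0 \<Longrightarrow> weighted_coeff d (int k * int d) p = coeff p k"
  unfolding weighted_coeff_def by simp

lemma weighted_coeff_cases:
  assumes "d > 0"
  obtains k where "e = int k * int d" "weighted_coeff d e p = coeff p k"
  | "\<And>k. e \<noteq> int k * int d" "weighted_coeff d e p = 0"
proof (cases "0 \<le> e \<and> int d dvd e")
  case True
  then obtain m where m: "e = int d * m" by (auto elim: dvdE)
  with True assms have "0 \<le> m" by (simp add: zero_le_mult_iff)
  with m have "e = int (nat m) * int d" by simp
  moreover have "weighted_coeff d e p = coeff p (nat m)"
    using True m assms unfolding weighted_coeff_def by simp
  ultimately show ?thesis by (rule that(1))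
next
  case False
  then have "e \<noteq> int k * int d" for k by auto
  moreover have "weighted_coeff d e p = 0" using False unfolding weighted_coeff_def by auto
  ultimately show ?thesis by (rule that(2))
qed

lemma weighted_coeff_eq_0:
  assumes "d > 0" "\<And>k. e \<noteq> int k * int d"
  shows "weighted_coeff d e p = 0"
  using assms by (cases rule: weighted_coeff_cases[OF \<open>d > 0\<close>, of e p]) auto

lemma weighted_degree_le_0 [simp]: "weighted_degree_le d e 0"
  unfolding weighted_degree_le_def by simp

lemma weighted_coeff_0 [simp]: "weighted_coeff d e 0 = 0"
  unfolding weighted_coeff_def by simp

lemma weighted_degree_le_1: "weighted_degree_le d 0 1"
  unfolding weighted_degree_le_def by (auto simp: coeff_1 zero_less_mult_iff)

lemma weighted_coeff_1: "weighted_coeff d 0 1 = 1"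
  unfolding weighted_coeff_def by simp

lemma weighted_degree_le_mono:
  "weighted_degree_le d e p \<Longrightarrow> e \<le> e' \<Longrightarrow> weighted_degree_le d e' p"
  unfolding weighted_degree_le_def by auto

lemma weighted_coeff_above:
  assumes "d > 0" "weighted_degree_le d e p" "e < e'"
  shows "weighted_coeff d e' p = 0"
  using assms unfolding weighted_degree_le_def
  by (cases rule: weighted_coeff_cases[OF \<open>d > 0\<close>, of e' p]) auto

lemma weighted_degree_le_add:
  "weighted_degree_le d e p \<Longrightarrow> weighted_degree_le d e q \<Longrightarrow> weighted_degree_le d e (p + q)"
  unfolding weighted_degree_le_def by simp

lemma weighted_coeff_add: "weighted_coeff d e (p + q) = weighted_coeff d e p + weighted_coeff d e q"
  unfolding weighted_coeff_def by simp

lemma weighted_degree_le_diff: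
  "weighted_degree_le d e p \<Longrightarrow> weighted_degree_le d e q \<Longrightarrow> weighted_degree_le d e (p - q)"
  unfolding weighted_degree_le_def by simp

lemma weighted_coeff_diff: "weighted_coeff d e (p - q) = weighted_coeff d e p - weighted_coeff d e q"
  unfolding weighted_coeff_def by simp

lemma weighted_degree_le_smult:
  "weighted_degree_le d e p \<Longrightarrow> weighted_degree_le d e (smult c p)"
  unfolding weighted_degree_le_def by simp

lemma weighted_coeff_smult: "weighted_coeff d e (smult c p) = c * weighted_coeff d e p"
  unfolding weighted_coeff_def by simp

lemma weighted_degree_le_sum:
  "(\<And>i. i \<in> I \<Longrightarrow> weighted_degree_le d e (p i)) \<Longrightarrow> weighted_degree_le d e (\<Sum>i\<in>I. p i)"
  unfolding weighted_degree_le_def by (simp add: coeff_sum)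

lemma weighted_coeff_sum: "weighted_coeff d e (\<Sum>i\<in>I. p i) = (\<Sum>i\<in>I. weighted_coeff d e (p i))"
  by (auto simp: weighted_coeff_def coeff_sum)

lemma weighted_mult_term_eq_0:
  fixes p q :: "'a::comm_semiring_0 poly"
  assumes p: "weighted_degree_le d e p" and q: "weighted_degree_le d e' q"
    and "i \<le> k" "e + e' \<le> int k * int d" "e \<noteq> int i * int d \<or> e' \<noteq> int (k - i) * int d"
  shows "coeff p i * coeff q (k - i) = 0"
proof (cases "e < int i * int d")
  case True
  then show ?thesis using p unfolding weighted_degree_le_def by simp
next
  case False
  then have "e' < int (k - i) * int d"
    using assms(3-) by (auto simp: of_nat_diff algebra_simps)
  then show ?thesis using q unfolding weighted_degree_le_def by simp
qed

lemma weighted_mult: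
  fixes p q :: "'a::comm_semiring_0 poly"
  assumes d: "d > 0" and p: "weighted_degree_le d e p" and q: "weighted_degree_le d e' q"
  shows "weighted_degree_le d (e + e') (p * q)"
    and "weighted_coeff d (e + e') (p * q) = weighted_coeff d e p * weighted_coeff d e' q"
proof -
  note vanish = weighted_mult_term_eq_0[OF p q]
  show "weighted_degree_le d (e + e') (p * q)"
    unfolding weighted_degree_le_def coeff_mult
    by (auto intro!: sum.neutral vanish simp: of_nat_diff left_diff_distrib)
  show "weighted_coeff d (e + e') (p * q) = weighted_coeff d e p * weighted_coeff d e' q"
  proof (cases "\<exists>i j. e = int i * int d \<and> e' = int j * int d")
    case True
    then obtain i j where ij: "e = int i * int d" "e' = int j * int d" by blast
    then have "coeff (p * q) (i + j) = (\<Sum>l\<in>{i}. coeff p l * coeff q (i + j - l))"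
      unfolding coeff_mult using vanish d by (intro sum.mono_neutral_right) (auto simp: algebra_simps)
    moreover have "e + e' = int (i + j) * int d" using ij by (simp add: algebra_simps)
    then have "weighted_coeff d (e + e') (p * q) = coeff (p * q) (i + j)"
      by (simp only: weighted_coeff_eq_coeff[OF d])
    ultimately show ?thesis unfolding ij by (simp only: weighted_coeff_eq_coeff[OF d]) simp
  next
    case False
    then have "weighted_coeff d e p * weighted_coeff d e' q = 0"
      using weighted_coeff_eq_0[OF d] by (metis mult_zero_left mult_zero_right)
    moreover have "weighted_coeff d (e + e') (p * q) = 0"
    proof (cases rule: weighted_coeff_cases[OF d, of "e + e'" "p * q"])
      case (1 k)
      have "coeff (p * q) k = 0"
        unfolding coeff_mult
      proof (intro sum.neutral ballI)
        fix i assume "i \<in> {..k}"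
        then show "coeff p i * coeff q (k - i) = 0"
          using 1 False by (intro vanish) (simp, simp, blast)
      qed
      with 1 show ?thesis by simp
    qed
    ultimately show ?thesis by simp
  qed
qed

lemma weighted_prod:
  fixes p :: "'b \<Rightarrow> 'a::comm_semiring_1 poly"
  assumes d: "d > 0" and "finite I" and "\<And>i. i \<in> I \<Longrightarrow> weighted_degree_le d (e i) (p i)"
  shows "weighted_degree_le d (\<Sum>i\<in>I. e i) (\<Prod>i\<in>I. p i) \<and>
    weighted_coeff d (\<Sum>i\<in>I. e i) (\<Prod>i\<in>I. p i) = (\<Prod>i\<in>I. weighted_coeff d (e i) (p i))"
  using assms(2,3)
proof (induction I rule: finite_induct)
  case empty
  then show ?case by (simp add: weighted_degree_le_1 weighted_coeff_1)
next
  case (insert i I)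
  then show ?case using weighted_mult[OF d, of "e i" "p i"] by simp
qed

lemma signof_mult_poly: "signof \<sigma> * q = smult (signof \<sigma>) q"
  by (simp add: sign_def)

lemma weighted_det:
  fixes G :: "'a::comm_ring_1 poly mat"
  assumes d: "d > 0" and G: "G \<in> carrier_mat n n"
    and entries: "\<And>i j. i < n \<Longrightarrow> j < n \<Longrightarrow> weighted_degree_le d (w j - v i) (G $$ (i, j))"
  defines "e \<equiv> (\<Sum>j=0..<n. w j) - (\<Sum>i=0..<n. v i)"
  shows "weighted_degree_le d e (det G)"
    and "weighted_coeff d e (det G) = det (mat n n (\<lambda>(i, j). weighted_coeff d (w j - v i) (G $$ (i, j))))"
proof -
  have "weighted_degree_le d e (\<Prod>i=0..<n. G $$ (i, \<sigma> i)) \<and>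
      weighted_coeff d e (\<Prod>i=0..<n. G $$ (i, \<sigma> i)) =
      (\<Prod>i=0..<n. weighted_coeff d (w (\<sigma> i) - v i) (G $$ (i, \<sigma> i)))"
    if \<sigma>: "\<sigma> permutes {0..<n}" for \<sigma>
  proof -
    have "(\<Sum>i=0..<n. w (\<sigma> i) - v i) = e"
      unfolding e_def sum_subtractf sum.permute[OF \<sigma>, of w] by (simp add: comp_def)
    moreover have "\<sigma> i < n" if "i < n" for i using permutes_in_image[OF \<sigma>] that by simp
    ultimately show ?thesis
      using weighted_prod[OF d, of "{0..<n}" "\<lambda>i. w (\<sigma> i) - v i" "\<lambda>i. G $$ (i, \<sigma> i)"] entries
      by simp
  qed
  then show "weighted_degree_le d e (det G)"
    and "weighted_coeff d e (det G) = det (mat n n (\<lambda>(i, j). weighted_coeff d (w j - v i) (G $$ (i, j))))"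
    unfolding det_def'[OF G] det_def'[OF mat_carrier] signof_mult_poly
    by (auto intro!: weighted_degree_le_sum weighted_degree_le_smult sum.cong prod.cong
        simp: weighted_coeff_sum weighted_coeff_smult permutes_in_image)
qed

lemma degree_eq_if_weighted:
  assumes d: "d > 0" and p: "weighted_degree_le d (int m * int d) p"
    and lead: "weighted_coeff d (int m * int d) p \<noteq> 0"
  shows "degree p = m"
proof (rule antisym)
  show "degree p \<le> m"
    using p d unfolding weighted_degree_le_def by (intro degree_le) auto
  show "m \<le> degree p"
    using lead by (intro le_degree) (simp add: weighted_coeff_eq_coeff[OF d])
qed

lemma weighted_recurrence_step:
  fixes p :: "'a::comm_ring_1 poly" and q :: "'b \<Rightarrow> 'a poly" and b c :: 'a and g :: "'b \<Rightarrow> 'a"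
  assumes d: "d > 0" and p: "weighted_degree_le d (e - int d) p"
    and q: "\<And>k. k \<in> K \<Longrightarrow> weighted_degree_le d (e - 1) (q k)"
  defines "f \<equiv> smult c ([:b, 1:] * p - (\<Sum>k\<in>K. smult (g k) (q k)))"
  shows "weighted_degree_le d e f" and "weighted_coeff d e f = c * weighted_coeff d (e - int d) p"
proof -
  have lin: "weighted_degree_le d (int d) [:b, 1:]" "weighted_coeff d (int d) [:b, 1:] = 1"
    using d weighted_coeff_eq_coeff[OF d, of 1 "[:b, 1:]"]
    by (auto simp: weighted_degree_le_def coeff_pCons split: nat.split)
  have "e = int d + (e - int d)" by simp
  then have prod: "weighted_degree_le d e ([:b, 1:] * p)"
    "weighted_coeff d e ([:b, 1:] * p) = weighted_coeff d (e - int d) p"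
    using weighted_mult[OF d lin(1) p] lin(2) by simp_all
  have tail: "weighted_degree_le d e (smult (g k) (q k))" "weighted_coeff d e (smult (g k) (q k)) = 0"
    if "k \<in> K" for k
    using q[OF that] weighted_degree_le_mono[OF q[OF that], of e]
    by (auto intro: weighted_degree_le_smult simp: weighted_coeff_smult weighted_coeff_above[OF d])
  show "weighted_degree_le d e f"
    unfolding f_def
    by (intro weighted_degree_le_smult weighted_degree_le_diff weighted_degree_le_sum prod(1) tail(1))
  have "weighted_coeff d e (\<Sum>k\<in>K. smult (g k) (q k)) = 0"
    unfolding weighted_coeff_sum using tail(2) by (intro sum.neutral) auto
  then show "weighted_coeff d e f = c * weighted_coeff d (e - int d) p"
    unfolding f_def weighted_coeff_smult weighted_coeff_diff prod(2) by simp
qed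

section \<open>Solving the recurrence backwards\<close>

text \<open>
  Write a solution backwards from a fixed index, V n = U(m - n). The recurrence at index
  m - n + r expresses V n through V (n - r), ..., V (n - 1). Iterating, V n is a linear
  combination of V 0, ..., V (r - 1) whose coefficients are the polynomials \<open>back_poly r a n s\<close>
  evaluated at z. The disjunct \<open>r = 0\<close> only serves termination.
\<close>

fun back_poly :: "nat \<Rightarrow> (int \<Rightarrow> 'a::field) \<Rightarrow> nat \<Rightarrow> nat \<Rightarrow> 'a poly" where
  "back_poly r a n s = (if n < r \<or> r = 0 then (if n = s then 1 else 0) else
     smult (1 / a (- int r)) ([:- a 0, 1:] * back_poly r a (n - r) s
       - (\<Sum>k\<in>{1..<r}. smult (a (- int k)) (back_poly r a (n - r + k) s))))"

declare back_poly.simps [simp del]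

lemma back_poly_below: "n < r \<Longrightarrow> back_poly r a n s = (if n = s then 1 else 0)"
  by (simp add: back_poly.simps)

lemma back_poly_step:
  "1 \<le> r \<Longrightarrow> r \<le> n \<Longrightarrow> back_poly r a n s = smult (1 / a (- int r)) ([:- a 0, 1:] * back_poly r a (n - r) s
     - (\<Sum>k\<in>{1..<r}. smult (a (- int k)) (back_poly r a (n - r + k) s)))"
  by (subst back_poly.simps) simp

definition back_rec :: "nat \<Rightarrow> (int \<Rightarrow> 'a::field) \<Rightarrow> 'a \<Rightarrow> (nat \<Rightarrow> 'a) \<Rightarrow> nat \<Rightarrow> bool" where
  "back_rec r a z V n \<longleftrightarrow>
     a (- int r) * V n = (z - a 0) * V (n - r) - (\<Sum>k\<in>{1..<r}. a (- int k) * V (n - r + k))"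

lemma back_rec_back_comb:
  assumes "1 \<le> r" "r \<le> n" "a (- int r) \<noteq> 0"
  shows "back_rec r a z (\<lambda>n. \<Sum>s<r. poly (back_poly r a n s) z * x s) n"
proof -
  have "a (- int r) * poly (back_poly r a n s) z = (z - a 0) * poly (back_poly r a (n - r) s) z
      - (\<Sum>k\<in>{1..<r}. a (- int k) * poly (back_poly r a (n - r + k) s) z)" for s
    using assms by (simp add: back_poly_step poly_sum algebra_simps)
  then show ?thesis
    unfolding back_rec_def sum_distrib_left
    by (simp add: mult.assoc[symmetric] left_diff_distrib sum_subtractf sum_distrib_right sum_distrib_left)
      (subst sum.swap, simp add: mult.assoc mult.left_commute)
qed

lemma back_comb_eq:
  assumes r: "1 \<le> r" and ar: "a (- int r) \<noteq> 0"
    and rec: "\<And>m. r \<le> m \<Longrightarrow> m < L \<Longrightarrow> back_rec r a z V m"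
  shows "n < L \<Longrightarrow> V n = (\<Sum>s<r. poly (back_poly r a n s) z * V s)"
proof (induction n rule: less_induct)
  case (less n)
  let ?h = "\<lambda>n. \<Sum>s<r. poly (back_poly r a n s) z * V s"
  show ?case
  proof (cases "n < r")
    case True
    have "?h n = (\<Sum>s<r. if s = n then V n else 0)"
      by (intro sum.cong) (auto simp: back_poly_below True)
    then show ?thesis using True by simp
  next
    case False
    have IH: "V (n - r + k) = ?h (n - r + k)" if "k < r" for k
      using less r False that by (intro less.IH) auto
    have "a (- int r) * V n = (z - a 0) * V (n - r) - (\<Sum>k\<in>{1..<r}. a (- int k) * V (n - r + k))"
      using rec[of n] False less.prems unfolding back_rec_def by simp
    also have "\<dots> = (z - a 0) * ?h (n - r) - (\<Sum>k\<in>{1..<r}. a (- int k) * ?h (n - r + k))"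
      using IH[of 0] r by (auto simp: IH intro!: sum.cong)
    also have "\<dots> = a (- int r) * ?h n"
      using back_rec_back_comb[of r n a z V] r ar False unfolding back_rec_def by simp
    finally show ?thesis using ar by simp
  qed
qed

lemma back_poly_weighted:
  assumes r: "1 \<le> r" and ar: "a (- int r) \<noteq> 0" and s: "s < r"
  shows "weighted_degree_le r (int n - int s) (back_poly r a n s) \<and>
    (weighted_coeff r (int n - int s) (back_poly r a n s) \<noteq> 0 \<longleftrightarrow> int r dvd int n - int s)"
proof (induction n rule: less_induct)
  case (less n)
  show ?case
  proof (cases "n < r")
    case True
    have "int r dvd int n - int s \<longleftrightarrow> n = s"
      using True s by (auto simp flip: mod_eq_dvd_iff)
    then show ?thesis
      using True by (auto simp: back_poly_below weighted_degree_le_1 weighted_coeff_1)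
  next
    case False
    let ?e = "int n - int s"
    have lt: "n - r < n" using False r by simp
    have eq: "int (n - r) - int s = ?e - int r" using False by (simp add: of_nat_diff)
    have prev: "weighted_degree_le r (?e - int r) (back_poly r a (n - r) s)"
      "weighted_coeff r (?e - int r) (back_poly r a (n - r) s) \<noteq> 0 \<longleftrightarrow> int r dvd ?e - int r"
      using less.IH[OF lt] unfolding eq by blast+
    have later: "weighted_degree_le r (?e - 1) (back_poly r a (n - r + k) s)" if "k \<in> {1..<r}" for k
    proof -
      have "n - r + k < n" using False that by auto
      then have "weighted_degree_le r (int (n - r + k) - int s) (back_poly r a (n - r + k) s)"
        using less.IH by blast
      then show ?thesis
        by (rule weighted_degree_le_mono) (use False that in \<open>auto simp: of_nat_diff\<close>)
    qed
    note step = weighted_recurrence_step[where c="1 / a (- int r)" and b="- a 0" and g="\<lambda>k. a (- int k)",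
      OF _ prev(1) later]
    have r0: "r > 0" and nr: "r \<le> n" using r False by auto
    have "weighted_degree_le r ?e (back_poly r a n s)"
      unfolding back_poly_step[OF r nr] using step(1)[OF r0] .
    moreover have "weighted_coeff r ?e (back_poly r a n s)
        = (1 / a (- int r)) * weighted_coeff r (?e - int r) (back_poly r a (n - r) s)"
      unfolding back_poly_step[OF r nr] using step(2)[OF r0] .
    moreover have "int r dvd ?e - int r \<longleftrightarrow> int r dvd ?e"
      using dvd_add_right_iff[of "int r" "int r" "?e - int r"] by simp
    ultimately show ?thesis using prev(2) ar by simp
  qed
qed

section \<open>Stable sequences with prescribed window tail\<close>

lemma sum_stencil_split:
  assumes "1 \<le> r"
  shows "(\<Sum>k\<in>{- int r..0}. g k) = g (- int r) + g 0 + (\<Sum>k\<in>{1..<r}. g (- int k))"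
proof -
  have "(\<Sum>k\<in>{- int r..0}. g k) = (\<Sum>k\<in>{0..r}. g (- int k))"
    by (rule sum.reindex_bij_witness[where j="\<lambda>k. nat (- k)" and i="\<lambda>k. - int k"]) auto
  also have "{0..r} = insert r (insert 0 {1..<r})" using assms by auto
  finally show ?thesis using assms by (simp add: algebra_simps)
qed

lemma Es_back_rec:
  assumes U: "U \<in> Es r a z" and r: "1 \<le> r" "r \<le> n" and n: "int n \<le> m + int r"
  shows "back_rec r a z (\<lambda>n. U (m - int n)) n"
proof -
  define j where "j = m - int n + int r"
  have "z * U j = (\<Sum>k\<in>{- int r..0}. a k * U (j + k))"
    using U n unfolding Es_def j_def by simp
  also have "\<dots> = a (- int r) * U (m - int n) + a 0 * U (m - int (n - r))
      + (\<Sum>k\<in>{1..<r}. a (- int k) * U (m - int (n - r + k)))"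
    unfolding sum_stencil_split[OF r(1)] using r by (simp add: j_def of_nat_diff algebra_simps)
  finally show ?thesis
    unfolding back_rec_def using r by (simp add: j_def of_nat_diff algebra_simps)
qed

text \<open>
  \<open>ext_seq r N a z x i\<close> is the entry U(i - r) of a stable sequence whose window ends with
  x (r - 1), ..., x 0: inside the window it is given by the backward polynomials, beyond it
  the recurrence is solved forwards, dividing by z - a 0. The disjunct \<open>i < r\<close> is redundant
  for r \<le> N and only serves termination.
\<close>

fun ext_seq :: "nat \<Rightarrow> nat \<Rightarrow> (int \<Rightarrow> 'a::field) \<Rightarrow> 'a \<Rightarrow> (nat \<Rightarrow> 'a) \<Rightarrow> nat \<Rightarrow> 'a" where
  "ext_seq r N a z x i = (if i < N \<or> i < r then (\<Sum>s<r. poly (back_poly r a (N - 1 - i) s) z * x s)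
     else (\<Sum>k\<in>{1..r}. a (- int k) * ext_seq r N a z x (i - k)) / (z - a 0))"

declare ext_seq.simps [simp del]

lemma ext_seq_recurrence:
  fixes a :: "int \<Rightarrow> 'a::field" and x :: "nat \<Rightarrow> 'a" and N :: nat
  assumes r: "1 \<le> r" "r \<le> i" and ar: "a (- int r) \<noteq> 0" and za: "z \<noteq> a 0"
  defines "W \<equiv> ext_seq r N a z x"
  shows "z * W i = a (- int r) * W (i - r) + a 0 * W i + (\<Sum>k\<in>{1..<r}. a (- int k) * W (i - k))"
proof (cases "i < N")
  case True
  let ?h = "\<lambda>n. \<Sum>s<r. poly (back_poly r a n s) z * x s"
  have W: "W i' = ?h (N - 1 - i')" if "i' \<le> i" for i'
    using that True unfolding W_def by (subst ext_seq.simps) simp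
  have "back_rec r a z ?h (N - 1 - i + r)"
    using r ar by (intro back_rec_back_comb) auto
  then have "a (- int r) * ?h (N - 1 - (i - r)) = (z - a 0) * ?h (N - 1 - i)
      - (\<Sum>k\<in>{1..<r}. a (- int k) * ?h (N - 1 - (i - k)))"
    unfolding back_rec_def using True r
    by (auto simp: Suc_diff_le intro!: sum.cong arg_cong2[where f="(-)"])
  then show ?thesis using W r by (simp add: algebra_simps)
next
  case False
  then have "(z - a 0) * W i = (\<Sum>k\<in>{1..r}. a (- int k) * W (i - k))"
    using za r unfolding W_def by (subst ext_seq.simps) simp
  also have "\<dots> = a (- int r) * W (i - r) + (\<Sum>k\<in>{1..<r}. a (- int k) * W (i - k))"
    using r by (simp add: atLeastLessThanSuc_atLeastAtMost[symmetric] sum.atLeast_Suc_lessThan)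
  finally show ?thesis by (simp add: algebra_simps)
qed

definition stable_ext :: "nat \<Rightarrow> nat \<Rightarrow> (int \<Rightarrow> 'a::field) \<Rightarrow> 'a \<Rightarrow> (nat \<Rightarrow> 'a) \<Rightarrow> int \<Rightarrow> 'a" where
  "stable_ext r N a z x j = (if j < - int r then 0 else ext_seq r N a z x (nat (j + int r)))"

lemma stable_ext_in_Es:
  assumes r: "1 \<le> r" and ar: "a (- int r) \<noteq> 0" and za: "z \<noteq> a 0"
  shows "stable_ext r N a z x \<in> Es r a z"
  unfolding Es_def
proof (intro CollectI conjI allI impI)
  fix j :: int
  show "j < - int r \<Longrightarrow> stable_ext r N a z x j = 0" unfolding stable_ext_def by simp
  assume j: "0 \<le> j"
  let ?W = "ext_seq r N a z x"
  define i where "i = nat j + r"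
  have shift: "stable_ext r N a z x (j - int k) = ?W (i - k)" if "k \<le> r" for k
  proof -
    have "nat (j - int k + int r) = nat j + r - k" using j that by (simp add: of_nat_diff)
    then show ?thesis using j that unfolding stable_ext_def i_def by (simp add: algebra_simps)
  qed
  have "(\<Sum>k\<in>{- int r..0}. a k * stable_ext r N a z x (j + k))
      = a (- int r) * ?W (i - r) + a 0 * ?W i + (\<Sum>k\<in>{1..<r}. a (- int k) * ?W (i - k))"
    unfolding sum_stencil_split[OF r] using shift[of r] shift[of 0] shift by simp
  also have "\<dots> = z * ?W i"
    using ext_seq_recurrence[where a=a, OF r _ ar za, of i] by (simp add: i_def)
  finally show "z * stable_ext r N a z x j = (\<Sum>k\<in>{- int r..0}. a k * stable_ext r N a z x (j + k))"
    using shift[of 0] by simp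
qed

definition window_tail :: "nat \<Rightarrow> nat \<Rightarrow> (int \<Rightarrow> complex) \<Rightarrow> complex vec" where
  "window_tail r N U = vec r (\<lambda>p. U (int (N - r + p) - int r))"

lemma window_tail_stable_ext:
  assumes r: "1 \<le> r" "r \<le> N"
  shows "window_tail r N (stable_ext r N a z x) = vec r (\<lambda>p. x (r - 1 - p))"
proof (rule eq_vecI)
  fix p assume "p < dim_vec (vec r (\<lambda>p. x (r - 1 - p)))"
  then have p: "p < r" by simp
  have e: "int (N - r + p) - int r + int r = int (N - 1 - (r - 1 - p))" using p r by simp
  have "stable_ext r N a z x (int (N - r + p) - int r) = ext_seq r N a z x (N - 1 - (r - 1 - p))"
    unfolding stable_ext_def e nat_int by simp
  also have "\<dots> = (\<Sum>s<r. poly (back_poly r a (r - 1 - p) s) z * x s)"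
  proof -
    have "N - 1 - (r - 1 - p) < N" "N - 1 - (N - 1 - (r - 1 - p)) = r - 1 - p" using p r by auto
    then show ?thesis unfolding ext_seq.simps[of r N a z x "N - 1 - (r - 1 - p)"] by simp
  qed
  also have "\<dots> = (\<Sum>s<r. if s = r - 1 - p then x (r - 1 - p) else 0)"
    using p by (intro sum.cong) (auto simp: back_poly_below)
  finally show "window_tail r N (stable_ext r N a z x) $ p = vec r (\<lambda>p. x (r - 1 - p)) $ p"
    unfolding window_tail_def using p by simp
qed (simp add: window_tail_def)

lemma Es_window_tail_surj:
  assumes "1 \<le> r" "r \<le> N" "a (- int r) \<noteq> 0" "z \<noteq> a 0" "y \<in> carrier_vec r"
  shows "\<exists>U\<in>Es r a z. window_tail r N U = y"
proof
  let ?x = "\<lambda>s. y $ (r - 1 - s)"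
  show "stable_ext r N a z ?x \<in> Es r a z" using assms by (intro stable_ext_in_Es)
  show "window_tail r N (stable_ext r N a z ?x) = y"
    using assms by (auto simp: window_tail_stable_ext)
qed

section \<open>The boundary matrix\<close>

lemma zero_pad_mult_piN:
  assumes C: "C \<in> carrier_mat r r" and rN: "r \<le> N"
  shows "zero_pad r N C *\<^sub>v piN r N U = C *\<^sub>v window_tail r N U"
proof (rule eq_vecI)
  fix t assume "t < dim_vec (C *\<^sub>v window_tail r N U)"
  then have t: "t < r" using C by simp
  have "(zero_pad r N C *\<^sub>v piN r N U) $ t =
      (\<Sum>j\<in>{0..<N}. (if j < N - r then 0 else C $$ (t, j - (N - r))) * U (int j - int r))"
    using t unfolding zero_pad_def piN_def by (simp add: scalar_prod_def)
  also have "\<dots> = (\<Sum>j\<in>{N - r..<N}. C $$ (t, j - (N - r)) * U (int j - int r))"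
    by (rule sum.mono_neutral_cong_right) auto
  also have "\<dots> = (\<Sum>p\<in>{0..<r}. C $$ (t, p) * U (int (N - r + p) - int r))"
    by (rule sum.reindex_bij_witness[where i="\<lambda>p. N - r + p" and j="\<lambda>j. j - (N - r)"])
      (use rN in auto)
  also have "\<dots> = (C *\<^sub>v window_tail r N U) $ t"
    using C t unfolding window_tail_def by (simp add: scalar_prod_def)
  finally show "(zero_pad r N C *\<^sub>v piN r N U) $ t = (C *\<^sub>v window_tail r N U) $ t" .
qed (use C in \<open>simp add: zero_pad_def\<close>)

definition back_mat :: "nat \<Rightarrow> nat \<Rightarrow> (int \<Rightarrow> 'a::field) \<Rightarrow> 'a poly mat" where
  "back_mat r N a = mat N r (\<lambda>(i, p). back_poly r a (N - 1 - i) (r - 1 - p))"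

lemma piN_eq_back_mat:
  assumes U: "U \<in> Es r a z" and r: "1 \<le> r" "r \<le> N" and ar: "a (- int r) \<noteq> 0"
  shows "piN r N U = map_mat (\<lambda>q. poly q z) (back_mat r N a) *\<^sub>v window_tail r N U"
proof (rule eq_vecI)
  fix i assume "i < dim_vec (map_mat (\<lambda>q. poly q z) (back_mat r N a) *\<^sub>v window_tail r N U)"
  then have i: "i < N" unfolding back_mat_def by simp
  define m where "m = int N - 1 - int r"
  define V where "V n = U (m - int n)" for n
  have "V n = (\<Sum>s<r. poly (back_poly r a n s) z * V s)" if "n < N" for n
    unfolding V_def using that
    by (intro back_comb_eq[where L=N and r=r and a=a, OF r(1) ar])
      (auto intro!: Es_back_rec[OF U r(1)] simp: m_def)
  from this[of "N - 1 - i"] i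
  have "U (int i - int r) = (\<Sum>s<r. poly (back_poly r a (N - 1 - i) s) z * V s)"
    unfolding V_def m_def by (simp add: of_nat_diff)
  also have "\<dots> = (\<Sum>p<r. poly (back_poly r a (N - 1 - i) (r - 1 - p)) z * V (r - 1 - p))"
    using sum.nat_diff_reindex[of "\<lambda>s. poly (back_poly r a (N - 1 - i) s) z * V s" r] by simp
  also have "\<dots> = (map_mat (\<lambda>q. poly q z) (back_mat r N a) *\<^sub>v window_tail r N U) $ i"
    using i r unfolding back_mat_def window_tail_def V_def m_def
    by (auto simp: scalar_prod_def lessThan_atLeast0 of_nat_diff intro!: sum.cong)
  finally show "piN r N U $ i = (map_mat (\<lambda>q. poly q z) (back_mat r N a) *\<^sub>v window_tail r N U) $ i"
    using i unfolding piN_def by simp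
qed (simp add: piN_def back_mat_def)

lemma comm_ring_hom_poly_eval: "comm_ring_hom (\<lambda>p. poly p z)"
  by unfold_locales auto

lemma comm_ring_hom_const_poly: "comm_ring_hom (\<lambda>b. [:b:])"
  by unfold_locales (auto simp: mult_pCons_left)

definition boundary_mat :: "nat \<Rightarrow> nat \<Rightarrow> (int \<Rightarrow> complex) \<Rightarrow> complex mat \<Rightarrow> complex poly mat" where
  "boundary_mat r N a B = map_mat (\<lambda>b. [:b:]) B * back_mat r N a"

lemma boundary_mat_carrier: "B \<in> carrier_mat r N \<Longrightarrow> boundary_mat r N a B \<in> carrier_mat r r"
  unfolding boundary_mat_def back_mat_def by auto

lemma boundary_mat_identity:
  assumes U: "U \<in> Es r a z" and r: "1 \<le> r" "r \<le> N" and ar: "a (- int r) \<noteq> 0"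
    and B: "B \<in> carrier_mat r N"
  shows "B *\<^sub>v piN r N U = zero_pad r N (map_mat (\<lambda>q. poly q z) (boundary_mat r N a B)) *\<^sub>v piN r N U"
proof -
  interpret poly_eval: comm_ring_hom "\<lambda>p. poly p z" by (rule comm_ring_hom_poly_eval)
  let ?F = "map_mat (\<lambda>q. poly q z) (back_mat r N a)"
  have F: "?F \<in> carrier_mat N r" unfolding back_mat_def by simp
  have "map_mat (\<lambda>q. poly q z) (boundary_mat r N a B)
      = map_mat (\<lambda>q. poly q z) (map_mat (\<lambda>b. [:b:]) B) * ?F"
    unfolding boundary_mat_def using B by (intro poly_eval.mat_hom_mult) (auto simp: back_mat_def)
  also have "map_mat (\<lambda>q. poly q z) (map_mat (\<lambda>b. [:b:]) B) = B" by auto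
  finally have "map_mat (\<lambda>q. poly q z) (boundary_mat r N a B) = B * ?F" .
  moreover have "B *\<^sub>v piN r N U = (B * ?F) *\<^sub>v window_tail r N U"
    using piN_eq_back_mat[OF U r ar] B F by (simp add: window_tail_def)
  ultimately show ?thesis
    using zero_pad_mult_piN[of _ r N U] r B F by simp
qed

lemma zero_pad_unique:
  assumes r: "1 \<le> r" "r \<le> N" and ar: "a (- int r) \<noteq> 0" and za: "z \<noteq> a 0"
    and C: "C \<in> carrier_mat r r" "C' \<in> carrier_mat r r"
    and eq: "\<And>U. U \<in> Es r a z \<Longrightarrow> zero_pad r N C *\<^sub>v piN r N U = zero_pad r N C' *\<^sub>v piN r N U"
  shows "C = C'"
proof (rule eq_matI)
  fix t p assume "t < dim_row C'" "p < dim_col C'"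
  then have t: "t < r" and p: "p < r" using C by auto
  obtain U where "U \<in> Es r a z" and tail: "window_tail r N U = unit_vec r p"
    using Es_window_tail_surj[OF r ar za, of "unit_vec r p"] by auto
  then have "C *\<^sub>v unit_vec r p = C' *\<^sub>v unit_vec r p"
    using eq zero_pad_mult_piN[OF _ r(2)] C by metis
  then have "(C *\<^sub>v unit_vec r p) $ t = (C' *\<^sub>v unit_vec r p) $ t" by simp
  then show "C $$ (t, p) = C' $$ (t, p)" using C t p by simp
qed (use C in auto)

section \<open>The degree of the determinant\<close>

lemma mod_shift_permutes:
  assumes "0 < n"
  shows "(\<lambda>i. if i < n then nat ((int i - c) mod int n) else i) permutes {0..<n}"
    (is "?\<rho> permutes _")
proof (rule bij_imp_permutes)
  have into: "?\<rho> ` {0..<n} \<subseteq> {0..<n}"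
    using assms by (auto simp: nat_less_iff)
  have inj: "inj_on ?\<rho> {0..<n}"
  proof (rule inj_onI)
    fix i j assume ij: "i \<in> {0..<n}" "j \<in> {0..<n}" and "?\<rho> i = ?\<rho> j"
    then have "(int i - c) mod int n = (int j - c) mod int n"
      using assms by (simp add: nat_eq_iff2)
    then have "int i mod int n = int j mod int n"
      by (simp add: mod_eq_dvd_iff)
    then show "i = j" using ij by simp
  qed
  then show "bij_betw ?\<rho> {0..<n} {0..<n}"
    unfolding bij_betw_def using endo_inj_surj[OF _ into inj] by blast
qed simp

lemma det_nonzero_if_permutation_pattern:
  fixes A :: "'a::idom mat"
  assumes A: "A \<in> carrier_mat n n" and \<rho>: "\<rho> permutes {0..<n}"
    and pattern: "\<And>i j. i < n \<Longrightarrow> j < n \<Longrightarrow> A $$ (i, j) \<noteq> 0 \<longleftrightarrow> j = \<rho> i"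
  shows "det A \<noteq> 0"
proof -
  have "(\<Prod>i=0..<n. A $$ (i, \<sigma> i)) = 0" if "\<sigma> permutes {0..<n}" "\<sigma> \<noteq> \<rho>" for \<sigma>
  proof -
    obtain i where "\<sigma> i \<noteq> \<rho> i" using \<open>\<sigma> \<noteq> \<rho>\<close> by blast
    moreover from this have "i < n"
      using permutes_not_in[OF that(1)] permutes_not_in[OF \<rho>] by fastforce
    ultimately show ?thesis
      using pattern[of i "\<sigma> i"] permutes_in_image[OF that(1)] by (intro prod_zero) auto
  qed
  then have "det A = signof \<rho> * (\<Prod>i=0..<n. A $$ (i, \<rho> i))"
    unfolding det_def'[OF A] using \<rho>
    by (subst sum.mono_neutral_right[where S="{\<rho>}"]) (auto simp: finite_permutations)
  moreover have "A $$ (i, \<rho> i) \<noteq> 0" if "i < n" for i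
    using pattern[of i "\<rho> i"] permutes_in_image[OF \<rho>] that by simp
  ultimately show ?thesis by (simp add: sign_def)
qed

lemma left_block_factorization:
  assumes B: "B \<in> carrier_mat r N" and rN: "r \<le> N" and L: "invertible_mat (left_block r B)"
  obtains B' where "B' \<in> carrier_mat r N" "B = left_block r B * B'"
    "\<And>t i. t < r \<Longrightarrow> i < r \<Longrightarrow> B' $$ (t, i) = (if t = i then 1 else 0)"
    and "det (left_block r B) \<noteq> 0"
proof -
  let ?L = "left_block r B"
  have Lc: "?L \<in> carrier_mat r r" unfolding left_block_def by simp
  obtain Li where Li: "Li \<in> carrier_mat r r" "?L * Li = 1\<^sub>m r" "Li * ?L = 1\<^sub>m r"
    using L Lc unfolding invertible_mat_def inverts_mat_def
    by (metis carrier_matD carrier_matI index_mult_mat(2,3) index_one_mat(2,3))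
  let ?B' = "Li * B"
  have "B = ?L * ?B'"
    using Li Lc B by (simp add: assoc_mult_mat[symmetric, of _ r r _ r _ N])
  moreover have "?B' $$ (t, i) = (if t = i then 1 else 0)" if "t < r" "i < r" for t i
  proof -
    have "?B' $$ (t, i) = row Li t \<bullet> col B i" using that Li B rN by simp
    also have "col B i = col ?L i" using that B rN unfolding left_block_def by (auto simp: col_def)
    also have "row Li t \<bullet> col ?L i = (Li * ?L) $$ (t, i)"
      using that Li Lc by (intro index_mult_mat(1)[symmetric]) auto
    finally show ?thesis using Li that by simp
  qed
  moreover have "det ?L * det Li = 1"
    using det_mult[OF Lc Li(1)] Li(2) by simp
  then have "det ?L \<noteq> 0" by auto
  ultimately show ?thesis using that[of ?B'] Li B by auto
qed

lemma back_mat_weighted: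
  assumes r: "1 \<le> r" "r \<le> N" and ar: "a (- int r) \<noteq> 0" and i: "i < N" and p: "p < r"
  defines "e \<equiv> int (N - r) + int p - int i"
  shows "weighted_degree_le r e (back_mat r N a $$ (i, p))"
    and "weighted_coeff r e (back_mat r N a $$ (i, p)) \<noteq> 0 \<longleftrightarrow> int r dvd e"
proof -
  have "int (N - 1 - i) - int (r - 1 - p) = e" unfolding e_def using r i p by (simp add: of_nat_diff)
  then show "weighted_degree_le r e (back_mat r N a $$ (i, p))"
    and "weighted_coeff r e (back_mat r N a $$ (i, p)) \<noteq> 0 \<longleftrightarrow> int r dvd e"
    using back_poly_weighted[where r=r and a=a and s="r - 1 - p" and n="N - 1 - i", OF r(1) ar] i p
    unfolding back_mat_def by auto
qed

lemma boundary_mat_entry: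
  assumes r: "r \<le> N" and B: "B \<in> carrier_mat r N" and t: "t < r" and p: "p < r"
    and unit: "\<And>i. i < r \<Longrightarrow> B $$ (t, i) = (if t = i then 1 else 0)"
  shows "boundary_mat r N a B $$ (t, p)
    = back_mat r N a $$ (t, p) + (\<Sum>i\<in>{r..<N}. smult (B $$ (t, i)) (back_mat r N a $$ (i, p)))"
proof -
  have "boundary_mat r N a B $$ (t, p) = (\<Sum>i\<in>{0..<N}. smult (B $$ (t, i)) (back_mat r N a $$ (i, p)))"
    using B t p unfolding boundary_mat_def by (simp add: scalar_prod_def back_mat_def)
  also have "\<dots> = (\<Sum>i\<in>{0..<r}. smult (B $$ (t, i)) (back_mat r N a $$ (i, p)))
      + (\<Sum>i\<in>{r..<N}. smult (B $$ (t, i)) (back_mat r N a $$ (i, p)))"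
    using r by (simp add: sum.atLeastLessThan_concat)
  also have "(\<Sum>i\<in>{0..<r}. smult (B $$ (t, i)) (back_mat r N a $$ (i, p)))
      = (\<Sum>i\<in>{0..<r}. if i = t then back_mat r N a $$ (t, p) else 0)"
    by (intro sum.cong) (auto simp: unit)
  finally show ?thesis using t by simp
qed

lemma boundary_mat_weighted:
  assumes r: "1 \<le> r" "r \<le> N" and ar: "a (- int r) \<noteq> 0" and B: "B \<in> carrier_mat r N"
    and t: "t < r" and p: "p < r"
    and unit: "\<And>i. i < r \<Longrightarrow> B $$ (t, i) = (if t = i then 1 else 0)"
  defines "e \<equiv> int (N - r) + int p - int t"
  shows "weighted_degree_le r e (boundary_mat r N a B $$ (t, p))"
    and "weighted_coeff r e (boundary_mat r N a B $$ (t, p)) \<noteq> 0 \<longleftrightarrow> int r dvd e"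
proof -
  let ?F = "back_mat r N a"
  have r0: "r > 0" using r by simp
  have entry: "boundary_mat r N a B $$ (t, p)
      = ?F $$ (t, p) + (\<Sum>i\<in>{r..<N}. smult (B $$ (t, i)) (?F $$ (i, p)))"
    using unit by (rule boundary_mat_entry[OF r(2) B t p])
  note F = back_mat_weighted[where a=a, OF r ar _ p]
  have "weighted_degree_le r e (smult (B $$ (t, i)) (?F $$ (i, p)))"
    and "weighted_coeff r e (smult (B $$ (t, i)) (?F $$ (i, p))) = 0" if "i \<in> {r..<N}" for i
  proof -
    have "weighted_degree_le r (e - 1) (?F $$ (i, p))"
      using F(1)[of i] that t by (auto simp: e_def elim!: weighted_degree_le_mono)
    then show "weighted_degree_le r e (smult (B $$ (t, i)) (?F $$ (i, p)))"
      and "weighted_coeff r e (smult (B $$ (t, i)) (?F $$ (i, p))) = 0"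
      using weighted_degree_le_mono[of r "e - 1" _ e]
      by (auto simp: weighted_coeff_smult weighted_coeff_above[OF r0] intro: weighted_degree_le_smult)
  qed
  moreover have "weighted_degree_le r e (?F $$ (t, p))"
    "weighted_coeff r e (?F $$ (t, p)) \<noteq> 0 \<longleftrightarrow> int r dvd e"
    using F[of t] t r unfolding e_def by auto
  ultimately show "weighted_degree_le r e (boundary_mat r N a B $$ (t, p))"
    and "weighted_coeff r e (boundary_mat r N a B $$ (t, p)) \<noteq> 0 \<longleftrightarrow> int r dvd e"
    unfolding entry weighted_coeff_add weighted_coeff_sum
    by (auto intro!: weighted_degree_le_add weighted_degree_le_sum)
qed

lemma degree_det_boundary_mat_normalized:
  assumes r: "1 \<le> r" "r \<le> N" and ar: "a (- int r) \<noteq> 0" and B: "B \<in> carrier_mat r N"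
    and unit: "\<And>t i. t < r \<Longrightarrow> i < r \<Longrightarrow> B $$ (t, i) = (if t = i then 1 else 0)"
  shows "degree (det (boundary_mat r N a B)) = N - r"
proof -
  define M where "M = N - r"
  let ?G = "boundary_mat r N a B"
  let ?lead = "mat r r (\<lambda>(t, p). weighted_coeff r (int M + int p - int t) (?G $$ (t, p)))"
  have r0: "r > 0" using r by simp
  have G: "weighted_degree_le r (int M + int p - int t) (?G $$ (t, p))"
    "weighted_coeff r (int M + int p - int t) (?G $$ (t, p)) \<noteq> 0 \<longleftrightarrow> int r dvd int M + int p - int t"
    if "t < r" "p < r" for t p
    using boundary_mat_weighted[where a=a, OF r ar B that unit[OF that(1)]] unfolding M_def by auto
  have "(\<Sum>p=0..<r. int M + int p) - (\<Sum>t=0..<r. int t) = int M * int r"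
    by (simp add: sum.distrib)
  then have "weighted_degree_le r (int M * int r) (det ?G)"
    "weighted_coeff r (int M * int r) (det ?G) = det ?lead"
    using weighted_det[OF r0 boundary_mat_carrier[OF B], of "\<lambda>p. int M + int p" "\<lambda>t. int t"] G(1)
    by auto
  moreover have "det ?lead \<noteq> 0"
  proof (rule det_nonzero_if_permutation_pattern[OF mat_carrier mod_shift_permutes[OF r0, of "int M"]])
    fix t p assume t: "t < r" and p: "p < r"
    have "int r dvd int M + int p - int t \<longleftrightarrow> int p mod int r = (int t - int M) mod int r"
      by (simp add: mod_eq_dvd_iff algebra_simps)
    also have "\<dots> \<longleftrightarrow> p = nat ((int t - int M) mod int r)"
      using p by auto
    finally show "?lead $$ (t, p) \<noteq> 0 \<longleftrightarrow> p = (if t < r then nat ((int t - int M) mod int r) else t)"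
      using G(2)[OF t p] t p by simp
  qed
  ultimately show ?thesis
    unfolding M_def by (intro degree_eq_if_weighted[OF r0]) auto
qed

lemma degree_det_boundary_mat:
  assumes r: "1 \<le> r" "r \<le> N" and ar: "a (- int r) \<noteq> 0" and B: "B \<in> carrier_mat r N"
    and L: "invertible_mat (left_block r B)"
  shows "degree (det (boundary_mat r N a B)) = N - r"
proof -
  interpret const: comm_ring_hom "\<lambda>b. [:b:]" by (rule comm_ring_hom_const_poly)
  let ?L = "left_block r B"
  have Lc: "?L \<in> carrier_mat r r" unfolding left_block_def by simp
  obtain B' where B': "B' \<in> carrier_mat r N" "B = ?L * B'"
    and unit: "\<And>t i. t < r \<Longrightarrow> i < r \<Longrightarrow> B' $$ (t, i) = (if t = i then 1 else 0)"
    and detL: "det ?L \<noteq> 0"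
    using left_block_factorization[OF B r(2) L] by blast
  have "boundary_mat r N a B = map_mat (\<lambda>b. [:b:]) ?L * boundary_mat r N a B'"
    unfolding boundary_mat_def
    by (subst B'(2), subst const.mat_hom_mult[OF Lc B'(1)])
      (rule assoc_mult_mat[of _ r r _ N _ r], use Lc B'(1) in \<open>auto simp: back_mat_def\<close>)
  then have "det (boundary_mat r N a B) = [:det ?L:] * det (boundary_mat r N a B')"
    using det_mult[OF _ boundary_mat_carrier[OF B'(1)], of "map_mat (\<lambda>b. [:b:]) ?L"] Lc by simp
  then show ?thesis
    using degree_det_boundary_mat_normalized[where a=a, OF r ar B'(1) unit] detL by simp
qed

theorem lemma3p2:
  fixes r N :: nat and a :: "int \<Rightarrow> complex" and B :: "complex mat"
  assumes "r \<ge> 1" and "N \<ge> r"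
    and "a (- int r) \<noteq> 0" and "cmod (a 0) < 1"
    and "B \<in> carrier_mat r N"
    and "invertible_mat (left_block r B)"
  shows "(\<forall>z. cmod z \<ge> 1 \<longrightarrow>
            (\<exists>!C. C \<in> carrier_mat r r \<and>
               (\<forall>U\<in>Es r a z. B *\<^sub>v piN r N U = zero_pad r N C *\<^sub>v piN r N U)))
       \<and> (\<exists>P :: complex poly mat. P \<in> carrier_mat r r \<and>
            (\<forall>z. cmod z \<ge> 1 \<longrightarrow>
               (\<forall>U\<in>Es r a z. B *\<^sub>v piN r N U
                   = zero_pad r N (map_mat (\<lambda>p. poly p z) P) *\<^sub>v piN r N U)) \<and>
            (\<exists>q :: complex poly. degree q = N - r \<and>
               (\<forall>z. cmod z \<ge> 1 \<longrightarrow> det (map_mat (\<lambda>p. poly p z) P) = poly q z)))"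
proof -
  let ?P = "boundary_mat r N a B"
  have P: "?P \<in> carrier_mat r r" by (rule boundary_mat_carrier[OF assms(5)])
  have identity: "B *\<^sub>v piN r N U = zero_pad r N (map_mat (\<lambda>p. poly p z) ?P) *\<^sub>v piN r N U"
    if "U \<in> Es r a z" for U z
    by (rule boundary_mat_identity[where a=a, OF that assms(1,2,3,5)])
  have eval_det: "det (map_mat (\<lambda>p. poly p z) ?P) = poly (det ?P) z" for z
    by (rule comm_ring_hom.hom_det[OF comm_ring_hom_poly_eval])
  have degree: "degree (det ?P) = N - r"
    by (rule degree_det_boundary_mat[where a=a, OF assms(1,2,3,5,6)])
  show ?thesis
  proof (intro conjI allI impI)
    fix z :: complex assume "cmod z \<ge> 1"
    then have "z \<noteq> a 0" using assms(4) by auto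
    note unique = zero_pad_unique[where a=a, OF assms(1,2,3) this]
    show "\<exists>!C. C \<in> carrier_mat r r \<and> (\<forall>U\<in>Es r a z. B *\<^sub>v piN r N U = zero_pad r N C *\<^sub>v piN r N U)"
    proof (rule ex1I[of _ "map_mat (\<lambda>p. poly p z) ?P"])
      fix C assume "C \<in> carrier_mat r r \<and> (\<forall>U\<in>Es r a z. B *\<^sub>v piN r N U = zero_pad r N C *\<^sub>v piN r N U)"
      then show "C = map_mat (\<lambda>p. poly p z) ?P"
        using P identity by (intro unique) auto
    qed (use P identity in auto)
  qed (use P identity eval_det degree in blast)
qed

end
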